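(* Let $G$ be a chordal graph with evaporation sequence $L_1,\dots,L_t$ with exception set $X$ (a clique), where $t\ge 2$, and suppose $X\cup L_t$ is a clique. For each connected component $C$ of $G[L_{t-1}]$ let $\hat N(C):=N_G(C)\cap(X\cup L_t)$. Then one of the following holds: (1) there is at most one connected component $C$ of $G[L_{t-1}]$ with $\hat N(C)=X\cup L_t$, and $L_t\subseteq\bigcup\{\hat N(C): C \text{ a component of } G[L_{t-1}],\ \hat N(C)\ne X\cup L_t\}$; (2) there are at least two distinct connected components $C_1,C_2$ of $G[L_{t-1}]$ with $\hat N(C_1)=\hat N(C_2)=X\cup L_t$.
   Context: A vertex is simplicial if its neighborhood is a clique. For a chordal graph $G$ and a clique $X\subseteq V(G)$ (possibly empty), the evaporation sequence of $G$ with exception set $X$ is defined recursively: if $X=V(G)$ it is the empty sequence; otherwise let $L_1$ be the set of simplicial vertices of $G$ that are not in $X$ (this set is always nonempty), and the evaporation sequence is $L_1$ followed by the evaporation sequence of $G-L_1$ with exception set $X$. For $S\subseteq V(G)$, $N_G(S)$ is the set of vertices not in $S$ adjacent to some vertex of $S$. *)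

theory Defs
  imports Main
begin

text \<open>All notions are relativised to V
  (edges with an endpoint outside V are ignored), so the induced subgraph
  on S \<subseteq> V is just (S, E).\<close>

definition sgraph :: "'a set \<Rightarrow> ('a \<Rightarrow> 'a \<Rightarrow> bool) \<Rightarrow> bool" where
  "sgraph V E \<longleftrightarrow> finite V \<and> (\<forall>x\<in>V. \<forall>y\<in>V. E x y \<longrightarrow> E y x) \<and> (\<forall>x\<in>V. \<not> E x x)"

definition is_clique :: "'a set \<Rightarrow> ('a \<Rightarrow> 'a \<Rightarrow> bool) \<Rightarrow> 'a set \<Rightarrow> bool" where
  "is_clique V E S \<longleftrightarrow> S \<subseteq> V \<and> (\<forall>x\<in>S. \<forall>y\<in>S. x \<noteq> y \<longrightarrow> E x y)"

definition chordal :: "'a set \<Rightarrow> ('a \<Rightarrow> 'a \<Rightarrow> bool) \<Rightarrow> bool" where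
  "chordal V E \<longleftrightarrow>
     (\<forall>xs. distinct xs \<and> length xs \<ge> 4 \<and> set xs \<subseteq> V
        \<and> (\<forall>i. Suc i < length xs \<longrightarrow> E (xs ! i) (xs ! Suc i))
        \<and> E (last xs) (hd xs)
      \<longrightarrow> (\<exists>i j. i < j \<and> j < length xs \<and> j \<noteq> Suc i
                 \<and> \<not> (i = 0 \<and> j = length xs - 1) \<and> E (xs ! i) (xs ! j)))"

definition simplicial :: "'a set \<Rightarrow> ('a \<Rightarrow> 'a \<Rightarrow> bool) \<Rightarrow> 'a \<Rightarrow> bool" where
  "simplicial V E v \<longleftrightarrow> v \<in> V \<and> is_clique V E {u \<in> V. E v u}"

inductive evap :: "'a set \<Rightarrow> ('a \<Rightarrow> 'a \<Rightarrow> bool) \<Rightarrow> 'a set \<Rightarrow> 'a set list \<Rightarrow> bool" where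
  evap_Nil: "X = V \<Longrightarrow> evap V E X []"
| evap_Cons: "X \<noteq> V \<Longrightarrow> L = {v \<in> V - X. simplicial V E v} \<Longrightarrow> evap (V - L) E X Ls
     \<Longrightarrow> evap V E X (L # Ls)"

definition nbhd :: "'a set \<Rightarrow> ('a \<Rightarrow> 'a \<Rightarrow> bool) \<Rightarrow> 'a set \<Rightarrow> 'a set" where
  "nbhd V E S = {v \<in> V - S. \<exists>u\<in>S \<inter> V. E u v}"

definition components :: "('a \<Rightarrow> 'a \<Rightarrow> bool) \<Rightarrow> 'a set \<Rightarrow> 'a set set" where
  "components E S = {{y. (\<lambda>a b. a \<in> S \<and> b \<in> S \<and> E a b)\<^sup>*\<^sup>* x y} | x. x \<in> S}"

end

theory Submission
  imports Defs
begin

text \<open>Let \<open>W\<close> be the vertex set left before the last two layers \<open>A\<close> and \<open>B\<close> evaporate, so that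
  \<open>A\<close> consists of the vertices of \<open>W - X\<close> simplicial in \<open>G[W]\<close> and \<open>H := X \<union> B = W - A\<close>.
  Since all vertices of \<open>A\<close> are simplicial, every component \<open>C\<close> of \<open>G[A]\<close> is a clique whose
  vertices all have the same neighbours in \<open>H\<close>, namely those of any single vertex of \<open>C\<close>.
  A vertex \<open>v \<in> B\<close> is not simplicial in \<open>G[W]\<close>, so it has two non-adjacent neighbours;
  they cannot both lie in the clique \<open>H\<close>. If one lies in a component \<open>C\<close> and the other in
  \<open>H\<close>, then \<open>v \<in> N(C)\<close> but \<open>N(C) \<noteq> H\<close>; if they lie in components \<open>C\<^sub>1, C\<^sub>2\<close>, these
  are distinct and \<open>v\<close> lies in both neighbourhoods, so either one of them is not all of
  \<open>H\<close>, or both are and alternative (2) holds.\<close>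

inductive_cases evap_ConsE: "evap V E X (L # Ls)"
inductive_cases evap_NilE: "evap V E X []"

lemma evap_drop:
  assumes "evap V E X Ls" "n \<le> length Ls"
  shows "\<exists>W \<subseteq> V. evap W E X (drop n Ls)"
  using assms
proof (induction arbitrary: n rule: evap.induct)
  case (evap_Nil X V E)
  then show ?case by (auto intro: evap.evap_Nil)
next
  case (evap_Cons X V L E Ls)
  show ?case
  proof (cases n)
    case 0
    then show ?thesis using evap_Cons.hyps by (auto intro: evap.evap_Cons)
  next
    case (Suc m)
    then show ?thesis using evap_Cons.IH[of m] evap_Cons.prems by auto
  qed
qed

lemma evap_last_two_layers:
  assumes "evap V E X Ls" "length Ls \<ge> 2"
  obtains W where "W \<subseteq> V"
    and "Ls ! (length Ls - 2) = {v \<in> W - X. simplicial W E v}"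
    and "X \<union> last Ls = W - Ls ! (length Ls - 2)"
    and "last Ls \<subseteq> W - X - Ls ! (length Ls - 2)"
proof -
  have "drop (length Ls - 2) Ls = [Ls ! (length Ls - 2), last Ls]"
    using assms(2)
    by (cases Ls rule: rev_cases; cases "butlast Ls" rule: rev_cases) (auto simp: nth_append)
  then obtain W where "W \<subseteq> V" and "evap W E X [Ls ! (length Ls - 2), last Ls]"
    using evap_drop[OF assms(1), of "length Ls - 2"] by auto
  then show ?thesis
    by (elim evap_ConsE evap_NilE) (rule that; auto)
qed

definition component_of :: "('a \<Rightarrow> 'a \<Rightarrow> bool) \<Rightarrow> 'a set \<Rightarrow> 'a \<Rightarrow> 'a set" where
  "component_of E S x = {y. (\<lambda>a b. a \<in> S \<and> b \<in> S \<and> E a b)\<^sup>*\<^sup>* x y}"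

lemma components_eq_image: "components E S = component_of E S ` S"
  unfolding components_def component_of_def by blast

context
  fixes V W A :: "'a set" and E :: "'a \<Rightarrow> 'a \<Rightarrow> bool"
  assumes graph: "sgraph V E" and WV: "W \<subseteq> V" and AW: "A \<subseteq> W"
    and A_simplicial: "\<forall>a\<in>A. simplicial W E a"
begin

lemma sym_on_W: "x \<in> W \<Longrightarrow> y \<in> W \<Longrightarrow> E x y \<Longrightarrow> E y x"
  using graph WV unfolding sgraph_def by blast

lemma common_neighbours_adjacent:
  assumes "a \<in> A" "y \<in> W" "z \<in> W" "E a y" "E a z" "y \<noteq> z"
  shows "E y z"
  using A_simplicial assms unfolding simplicial_def is_clique_def by blast

lemma component_of_simplicial_adjacent:
  assumes "a \<in> A" "y \<in> component_of E A a"
  shows "y \<in> A \<and> (y = a \<or> E a y)"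
  using assms(2) unfolding component_of_def mem_Collect_eq
proof (induction rule: rtranclp_induct)
  case base
  then show ?case using assms(1) by simp
next
  case (step y z)
  then have "y \<in> A" "z \<in> A" "E y z" by auto
  moreover have "z = a \<or> E a z" if "E a y"
    using common_neighbours_adjacent[of y a z] sym_on_W[of a y] that \<open>E y z\<close> \<open>y \<in> A\<close> \<open>z \<in> A\<close>
      assms(1) AW by blast
  ultimately show ?case using step.IH by blast
qed

lemma component_of_subset: "a \<in> A \<Longrightarrow> component_of E A a \<subseteq> A"
  using component_of_simplicial_adjacent by blast

lemma self_in_component_of: "a \<in> component_of E A a"
  unfolding component_of_def by simp

text \<open>Any vertex \<open>u\<close> of the component is \<open>a\<close> or a neighbour of \<open>a\<close>, and the neighbourhood of
  the simplicial vertex \<open>u\<close> is a clique, so a neighbour \<open>b\<close> of \<open>u\<close> is adjacent to \<open>a\<close>.\<close>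
lemma nbhd_component_of_simplicial:
  assumes "a \<in> A"
  shows "nbhd V E (component_of E A a) \<inter> (W - A) = {b \<in> W - A. E a b}"
proof -
  have "E a b" if "u \<in> component_of E A a" "E u b" "b \<in> W - A" for u b
  proof -
    from component_of_simplicial_adjacent[OF assms that(1)] have "u \<in> A" "u = a \<or> E a u"
      by auto
    then show ?thesis
      using common_neighbours_adjacent[of u a b] sym_on_W[of a u] sym_on_W[of a b] assms that AW
      by blast
  qed
  then show ?thesis
    using component_of_subset[OF assms] self_in_component_of[of a] assms AW WV
    unfolding nbhd_def by blast
qed

lemma nonsimplicial_vertex_seen_by_components:
  assumes H_clique: "is_clique V E (W - A)" and v: "v \<in> W - A" "\<not> simplicial W E v"
  obtains C where "C \<in> components E A" "v \<in> nbhd V E C" "\<not> W - A \<subseteq> nbhd V E C"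
  | C1 C2 where "C1 \<in> components E A" "C2 \<in> components E A" "C1 \<noteq> C2"
      "v \<in> nbhd V E C1" "v \<in> nbhd V E C2"
proof -
  obtain a b where ab: "a \<in> W" "b \<in> W" "E v a" "E v b" "a \<noteq> b" "\<not> E a b"
    using v unfolding simplicial_def is_clique_def by blast
  have nbhd_iff: "x \<in> nbhd V E (component_of E A c) \<longleftrightarrow> E c x" if "c \<in> A" "x \<in> W - A" for c x
    using nbhd_component_of_simplicial[OF that(1)] that by blast
  have partial: "\<not> W - A \<subseteq> nbhd V E (component_of E A c)" if "c \<in> A" "d \<in> W - A" "\<not> E c d"
    for c d
    using nbhd_iff that by blast
  have v_seen: "v \<in> nbhd V E (component_of E A c)" if "c \<in> A" "E v c" for c
    using nbhd_iff[OF that(1) v(1)] sym_on_W[of v c] that v(1) AW by blast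
  consider "a \<in> A" "b \<in> A" | "a \<in> A" "b \<notin> A" | "a \<notin> A" "b \<in> A" | "a \<notin> A" "b \<notin> A"
    by blast
  then show thesis
  proof cases
    case 1
    have "component_of E A a \<noteq> component_of E A b"
      using component_of_simplicial_adjacent[OF \<open>a \<in> A\<close>, of b] self_in_component_of[of b] ab
      by auto
    then show ?thesis
      using that(2) 1 v_seen ab components_eq_image by blast
  next
    case 2
    then show ?thesis
      using that(1) partial[of a b] v_seen[of a] ab components_eq_image by blast
  next
    case 3
    then show ?thesis
      using that(1) partial[of b a] v_seen[of b] sym_on_W[of b a] ab components_eq_image by blast
  next
    case 4
    then show ?thesis using H_clique ab unfolding is_clique_def by blast
  qed
qed

corollary nonsimplicial_vertex_in_partial_component_nbhd:
  assumes "is_clique V E (W - A)" "v \<in> W - A" "\<not> simplicial W E v"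
    and "\<not> (\<exists>C1 \<in> components E A. \<exists>C2 \<in> components E A.
             C1 \<noteq> C2 \<and> W - A \<subseteq> nbhd V E C1 \<and> W - A \<subseteq> nbhd V E C2)"
  shows "\<exists>C \<in> components E A. v \<in> nbhd V E C \<and> \<not> W - A \<subseteq> nbhd V E C"
proof (rule nonsimplicial_vertex_seen_by_components[OF assms(1-3)])
  fix C1 C2 assume "C1 \<in> components E A" "C2 \<in> components E A" "C1 \<noteq> C2"
    "v \<in> nbhd V E C1" "v \<in> nbhd V E C2"
  then show ?thesis using assms(4) by blast
qed blast

end

theorem lemma5p15:
  fixes V :: "'a set" and E :: "'a \<Rightarrow> 'a \<Rightarrow> bool" and X :: "'a set" and Ls :: "'a set list"
  assumes "sgraph V E" and "chordal V E" and "is_clique V E X"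
    and "evap V E X Ls" and "length Ls \<ge> 2"
    and "is_clique V E (X \<union> last Ls)"
  shows "((\<forall>C1 \<in> components E (Ls ! (length Ls - 2)). \<forall>C2 \<in> components E (Ls ! (length Ls - 2)).
            nbhd V E C1 \<inter> (X \<union> last Ls) = X \<union> last Ls \<and> nbhd V E C2 \<inter> (X \<union> last Ls) = X \<union> last Ls
            \<longrightarrow> C1 = C2)
         \<and> last Ls \<subseteq> \<Union>{nbhd V E C \<inter> (X \<union> last Ls) | C. C \<in> components E (Ls ! (length Ls - 2))
                                   \<and> nbhd V E C \<inter> (X \<union> last Ls) \<noteq> X \<union> last Ls})
       \<or> (\<exists>C1 \<in> components E (Ls ! (length Ls - 2)). \<exists>C2 \<in> components E (Ls ! (length Ls - 2)).
            C1 \<noteq> C2 \<and> nbhd V E C1 \<inter> (X \<union> last Ls) = X \<union> last Ls \<and> nbhd V E C2 \<inter> (X \<union> last Ls) = X \<union> last Ls)"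
  (is "(?unique \<and> ?covered) \<or> ?two_full")
proof -
  obtain W where WV: "W \<subseteq> V"
    and A: "Ls ! (length Ls - 2) = {v \<in> W - X. simplicial W E v}"
    and H: "X \<union> last Ls = W - Ls ! (length Ls - 2)"
    and B: "last Ls \<subseteq> W - X - Ls ! (length Ls - 2)"
    using evap_last_two_layers[OF assms(4,5)] .
  let ?A = "Ls ! (length Ls - 2)" and ?H = "X \<union> last Ls"
  have full_iff: "nbhd V E C \<inter> ?H = ?H \<longleftrightarrow> W - ?A \<subseteq> nbhd V E C" for C
    using H by blast
  have layer: "?A \<subseteq> W" "\<forall>a\<in>?A. simplicial W E a" "is_clique V E (W - ?A)"
    using A H assms(6) by auto
  show ?thesis
  proof (cases ?two_full)
    case False
    then have no_two_full: "\<not> (\<exists>C1 \<in> components E ?A. \<exists>C2 \<in> components E ?A.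
        C1 \<noteq> C2 \<and> W - ?A \<subseteq> nbhd V E C1 \<and> W - ?A \<subseteq> nbhd V E C2)"
      unfolding full_iff .
    have ?covered
    proof
      fix v assume "v \<in> last Ls"
      then have "v \<in> W - ?A" "\<not> simplicial W E v" using A B by auto
      then obtain C where "C \<in> components E ?A" "v \<in> nbhd V E C" "\<not> W - ?A \<subseteq> nbhd V E C"
        using nonsimplicial_vertex_in_partial_component_nbhd[OF assms(1) WV layer _ _ no_two_full]
        by blast
      with \<open>v \<in> last Ls\<close> show "v \<in> \<Union>{nbhd V E C \<inter> ?H | C. C \<in> components E ?A \<and> nbhd V E C \<inter> ?H \<noteq> ?H}"
        unfolding full_iff by blast
    qed
    moreover have ?unique using False by blast
    ultimately show ?thesis by blast
  qed simp
qed

end
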